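(* Starting from the freshly initialized sampling data structure (no point opened), the total running time of opening any set $S$ of $k$ points of $P$ by successive calls to MultiTreeOpen is $O(n\log(d\Delta)\log n)$.
   Context: $P\subseteq\mathbb{R}^d$ has $n$ points, $\Delta$ is the ratio of maximum to minimum distance between distinct points of $P$. Tree embedding: compute $\mathrm{MaxDist}$, an upper bound on the maximum pairwise distance within factor $2$ of it; add a uniformly random shift $s\in[0,\mathrm{MaxDist}]$ to each coordinate of all points; the root (height $0$) is the axis-aligned cube of side $2\,\mathrm{MaxDist}$ centered at an input point; recursively each node cube of side $L$ at height $i$ is split into $2^d$ subcubes of side $L/2$, nonempty ones become children connected by edges of weight $\sqrt d\,\mathrm{MaxDist}/2^i$, until each cube has at most one point (all leaves at height $H=O(\log(d\Delta))$). $\mathrm{TreeDist}_T$ is the shortest-path distance in tree $T$. The multi-tree embedding consists of three such trees with independent shifts; $\mathrm{MultiTreeDist}$ is the minimum of the three tree distances, $\mathrm{MultiTreeDist}(x,\emptyset)^2=M:=16d\,\mathrm{MaxDist}^2$. Sampling data structure: weights $w_x$ for $x\in P$, initially $M$; a balanced binary "sample-tree" with one leaf per point of $P$, each node's weight being the sum of $w_x$ over leaves in its subtree; a mark bit, initially unmarked, for every node of each of the three trees; and for each tree $T$ and node $v$ the set $P_T(v)\subseteq P$ of points in $v$'s subtree. MultiTreeOpen$(x)$: for each of the three trees $T$: let $v_0$ be the leaf of $T$ containing $x$; traverse towards the root forming a path $v_0,v_1,\dots,v_\ell$ until $v_\ell$ is the root or the parent of $v_\ell$ is marked; mark $v_0,\dots,v_\ell$;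 for each $y\in P_T(v_\ell)$, if $\mathrm{TreeDist}_T(y,x)^2<w_y$ then set $w_y\leftarrow\mathrm{TreeDist}_T(y,x)^2$ and traverse the sample-tree from $y$'s leaf to the root updating node weights depending on $w_y$. *)

theory Defs
  imports Complex_Main
begin

(* Points of R^d are represented as functions nat => real whose coordinates
   at indices >= d are zero; d is an explicit parameter. *)
type_synonym pt = "nat \<Rightarrow> real"
(* a node of a quadtree: (height, integer index of its grid cell) *)
type_synonym node = "nat \<times> (nat \<Rightarrow> int)"

definition edist :: "nat \<Rightarrow> pt \<Rightarrow> pt \<Rightarrow> real" where
  "edist d x y = sqrt (\<Sum>j<d. (x j - y j)^2)"

definition max_dist :: "pt set \<Rightarrow> nat \<Rightarrow> real" where
  "max_dist P d = Max {edist d x y | x y. x \<in> P \<and> y \<in> P}"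

definition min_dist :: "pt set \<Rightarrow> nat \<Rightarrow> real" where
  "min_dist P d = Min {edist d x y | x y. x \<in> P \<and> y \<in> P \<and> x \<noteq> y}"

definition aspect_ratio :: "pt set \<Rightarrow> nat \<Rightarrow> real" where
  "aspect_ratio P d = max_dist P d / min_dist P d"

(* The root cube has side 2*MD and is anchored at p0 - MD (centered at the
   input point p0); at height i the cubes have side 2*MD/2^i. *)
definition cell :: "nat \<Rightarrow> pt \<Rightarrow> real \<Rightarrow> real \<Rightarrow> nat \<Rightarrow> pt \<Rightarrow> (nat \<Rightarrow> int)" where
  "cell d p0 MD s i x =
     (if i = 0 then (\<lambda>_. 0)
      else (\<lambda>j. if j < d then \<lfloor>(x j + s - (p0 j - MD)) / (2 * MD / 2 ^ i)\<rfloor> else 0))"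

definition tnode :: "nat \<Rightarrow> pt \<Rightarrow> real \<Rightarrow> real \<Rightarrow> nat \<Rightarrow> pt \<Rightarrow> node" where
  "tnode d p0 MD s i x = (i, cell d p0 MD s i x)"

(* height H of the tree: first height at which every cube holds at most one point;
   all leaves are at height H *)
definition theight :: "pt set \<Rightarrow> nat \<Rightarrow> pt \<Rightarrow> real \<Rightarrow> real \<Rightarrow> nat" where
  "theight P d p0 MD s =
     (LEAST i. \<forall>x\<in>P. \<forall>y\<in>P. x \<noteq> y \<longrightarrow> cell d p0 MD s i x \<noteq> cell d p0 MD s i y)"

definition subtree_pts :: "pt set \<Rightarrow> nat \<Rightarrow> pt \<Rightarrow> real \<Rightarrow> real \<Rightarrow> node \<Rightarrow> pt set" where
  "subtree_pts P d p0 MD s v = {y \<in> P. tnode d p0 MD s (fst v) y = v}"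

(* TreeDist_T(x,y): edges from a node at height i to its children weigh sqrt d * MD / 2^i;
   j is the height of the lowest common ancestor *)
definition tree_dist :: "pt set \<Rightarrow> nat \<Rightarrow> pt \<Rightarrow> real \<Rightarrow> real \<Rightarrow> pt \<Rightarrow> pt \<Rightarrow> real" where
  "tree_dist P d p0 MD s x y =
     (let H = theight P d p0 MD s;
          j = (GREATEST j. j \<le> H \<and> cell d p0 MD s j x = cell d p0 MD s j y)
      in 2 * (\<Sum>i\<in>{j..<H}. sqrt (real d) * MD / 2 ^ i))"

(* length l of the path v_0 (leaf, height H), ..., v_l: stop at the root or
   when the parent of v_l is marked *)
definition path_len :: "pt set \<Rightarrow> nat \<Rightarrow> pt \<Rightarrow> real \<Rightarrow> real \<Rightarrow> node set \<Rightarrow> pt \<Rightarrow> nat" where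
  "path_len P d p0 MD s mk x =
     (let H = theight P d p0 MD s
      in LEAST k. k = H \<or> tnode d p0 MD s (H - Suc k) x \<in> mk)"

(* cost of one root-to-leaf update in the balanced sample-tree over n leaves *)
definition sample_update_cost :: "nat \<Rightarrow> nat" where
  "sample_update_cost n = nat \<lceil>log 2 (real n)\<rceil> + 1"

(* One tree T of MultiTreeOpen(x): returns new weights, new marks and the number of
   elementary steps: one per node visited/marked on the path, one per point y
   of P_T(v_l) inspected, plus a sample-tree leaf-to-root update when w_y changes. *)
definition open_tree :: "pt set \<Rightarrow> nat \<Rightarrow> pt \<Rightarrow> real \<Rightarrow> real \<Rightarrow> (pt \<Rightarrow> real) \<Rightarrow> node set \<Rightarrow> pt
      \<Rightarrow> (pt \<Rightarrow> real) \<times> node set \<times> nat" where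
  "open_tree P d p0 MD s w mk x =
     (let H = theight P d p0 MD s;
          l = path_len P d p0 MD s mk x;
          Q = subtree_pts P d p0 MD s (tnode d p0 MD s (H - l) x);
          td = (\<lambda>y. (tree_dist P d p0 MD s y x)^2);
          upd = (\<lambda>y. td y < w y);
          slen = sample_update_cost (card P)
      in ((\<lambda>y. if y \<in> Q \<and> upd y then td y else w y),
          mk \<union> {tnode d p0 MD s (H - k) x | k. k \<le> l},
          (l + 1) + (\<Sum>y\<in>Q. 1 + (if upd y then slen else 0))))"

(* state: weights w, and marks (set of marked nodes) for trees 0,1,2 *)
type_synonym state = "(pt \<Rightarrow> real) \<times> (nat \<Rightarrow> node set)"

definition multi_open :: "pt set \<Rightarrow> nat \<Rightarrow> pt \<Rightarrow> real \<Rightarrow> (nat \<Rightarrow> real) \<Rightarrow> state \<Rightarrow> pt \<Rightarrow> state \<times> nat" where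
  "multi_open P d p0 MD sh st x =
     (case st of (w0, mk) \<Rightarrow>
      (case open_tree P d p0 MD (sh 0) w0 (mk 0) x of (w1, m1, c1) \<Rightarrow>
      (case open_tree P d p0 MD (sh 1) w1 (mk 1) x of (w2, m2, c2) \<Rightarrow>
      (case open_tree P d p0 MD (sh 2) w2 (mk 2) x of (w3, m3, c3) \<Rightarrow>
        ((w3, mk(0 := m1, 1 := m2, 2 := m3)), c1 + c2 + c3)))))"

fun open_seq :: "pt set \<Rightarrow> nat \<Rightarrow> pt \<Rightarrow> real \<Rightarrow> (nat \<Rightarrow> real) \<Rightarrow> state \<Rightarrow> pt list \<Rightarrow> nat" where
  "open_seq P d p0 MD sh st [] = 0"
| "open_seq P d p0 MD sh st (x # xs) =
     (case multi_open P d p0 MD sh st x of (st', c) \<Rightarrow> c + open_seq P d p0 MD sh st' xs)"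

definition init_state :: "nat \<Rightarrow> real \<Rightarrow> state" where
  "init_state d MD = ((\<lambda>_. 16 * real d * MD^2), (\<lambda>_. {}))"

end

theory Submission
  imports Defs
begin

(* Amortisation over the marked nodes. Marking a node v is charged 1 + (1 + slen) |P_T(v)|,
   where slen = O(log n) is the cost of a sample-tree update: one step for v, and for every
   point of P_T(v) one inspection and at most one update. A call MultiTreeOpen(x) marks exactly
   the path it walks, all of whose nodes were unmarked (it stops below the first marked
   ancestor, and the leaf of x is unmarked because leaves separate the points and x is opened
   only once), and it scans only P_T(v_l) for the top node v_l of that path. Hence the total
   running time is at most the charge of all nodes of the three trees, which is
   (H + 1) n (2 + slen) per tree since every point lies in one node per level. Finally, the
   cubes at height ceil(log2(d Delta)) + 2 have side at most min_dist / d and therefore already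
   separate the points, so H <= log2(d Delta) + 3. *)

definition separating_height :: "pt set \<Rightarrow> nat \<Rightarrow> pt \<Rightarrow> real \<Rightarrow> real \<Rightarrow> nat \<Rightarrow> bool" where
  "separating_height P d p0 MD s i \<longleftrightarrow>
     (\<forall>x\<in>P. \<forall>y\<in>P. x \<noteq> y \<longrightarrow> cell d p0 MD s i x \<noteq> cell d p0 MD s i y)"

lemma theight_eq_Least: "theight P d p0 MD s = (LEAST i. separating_height P d p0 MD s i)"
  by (simp add: theight_def separating_height_def)

lemma theight_separating_le:
  assumes "separating_height P d p0 MD s i"
  shows "separating_height P d p0 MD s (theight P d p0 MD s)" and "theight P d p0 MD s \<le> i"
  using assms unfolding theight_eq_Least by (fact LeastI, fact Least_le)

lemma edist_pos:
  assumes "\<forall>j\<ge>d. x j = 0" "\<forall>j\<ge>d. y j = 0" "x \<noteq> y"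
  shows "0 < edist d x y"
proof -
  obtain j where j: "x j \<noteq> y j" using assms(3) by blast
  with assms(1,2) have "j < d" by (metis leI)
  have "0 < (x j - y j)^2" using j by simp
  also have "\<dots> \<le> (\<Sum>j<d. (x j - y j)^2)" using \<open>j < d\<close> by (intro member_le_sum) auto
  finally show ?thesis unfolding edist_def by simp
qed

lemma exists_coordinate_sq_ge:
  assumes "d \<ge> 1"
  obtains j where "j < d" "(edist d x y)^2 / real d \<le> (x j - y j)^2"
proof (rule ccontr)
  assume "\<not> thesis"
  with that have lt: "(x j - y j)^2 < (edist d x y)^2 / real d" if "j < d" for j
    using \<open>j < d\<close> by (meson not_le)
  have "(\<Sum>j<d. (x j - y j)^2) < (\<Sum>j<d. (edist d x y)^2 / real d)"
    using assms lt by (intro sum_strict_mono) (auto simp: lessThan_empty_iff)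
  also have "\<dots> = (\<Sum>j<d. (x j - y j)^2)"
    using assms by (simp add: edist_def sum_nonneg)
  finally show False by simp
qed

text \<open>Some coordinate differs by at least \<open>edist d x y / sqrt d \<ge> edist d x y / d\<close>, which is at
  least the side length of the cubes at height \<open>i\<close>.\<close>
lemma cell_neq_if_side_small:
  assumes "d \<ge> 1" "0 < MD" "i \<noteq> 0" "real d * (2 * MD / 2 ^ i) \<le> edist d x y"
  shows "cell d p0 MD s i x \<noteq> cell d p0 MD s i y"
proof
  assume eq: "cell d p0 MD s i x = cell d p0 MD s i y"
  define c where "c = 2 * MD / 2 ^ i"
  have c: "0 < c" using assms(2) by (simp add: c_def)
  obtain j where j: "j < d" "(edist d x y)^2 / real d \<le> (x j - y j)^2"
    using exists_coordinate_sq_ge[OF assms(1)] .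
  have "c^2 \<le> (edist d x y / real d)^2"
    using assms(1,4) c by (intro power_mono) (auto simp: c_def field_simps)
  also have "\<dots> \<le> (edist d x y)^2 / real d"
    using assms(1) by (simp add: power_divide divide_left_mono power2_eq_square)
  also have "\<dots> \<le> (x j - y j)^2" by (fact j(2))
  finally have "c \<le> \<bar>x j - y j\<bar>" using c power2_le_imp_le[of c "\<bar>x j - y j\<bar>"] by simp
  moreover
  have "\<lfloor>(x j + s - (p0 j - MD)) / c\<rfloor> = \<lfloor>(y j + s - (p0 j - MD)) / c\<rfloor>"
    using fun_cong[OF eq, of j] j(1) assms(3) by (simp add: cell_def c_def)
  then have "\<bar>(x j + s - (p0 j - MD)) / c - (y j + s - (p0 j - MD)) / c\<bar> < 1"
    by (rule floor_eq_imp_diff_1)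
  then have "\<bar>x j - y j\<bar> < c"
    using c by (simp add: diff_divide_distrib[symmetric])
  ultimately show False by simp
qed

lemma le_two_power_nat_ceiling_log:
  fixes x :: real
  assumes "0 < x"
  shows "x \<le> 2 ^ nat \<lceil>log 2 x\<rceil>"
proof -
  have "x = 2 powr (log 2 x)" using assms by simp
  also have "\<dots> \<le> 2 powr (real (nat \<lceil>log 2 x\<rceil>))" by (intro powr_mono) linarith+
  also have "\<dots> = 2 ^ nat \<lceil>log 2 x\<rceil>" by (simp add: powr_realpow)
  finally show ?thesis .
qed

lemma finite_edist_image: "finite P \<Longrightarrow> finite {edist d x y | x y. x \<in> P \<and> y \<in> P \<and> R x y}"
  by (rule finite_subset[of _ "(\<lambda>(x, y). edist d x y) ` (P \<times> P)"]) auto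

lemma edist_le_max_dist: "finite P \<Longrightarrow> x \<in> P \<Longrightarrow> y \<in> P \<Longrightarrow> edist d x y \<le> max_dist P d"
  unfolding max_dist_def using finite_edist_image[of P d "\<lambda>_ _. True"] by (intro Max_ge) auto

lemma min_dist_le_edist:
  "finite P \<Longrightarrow> x \<in> P \<Longrightarrow> y \<in> P \<Longrightarrow> x \<noteq> y \<Longrightarrow> min_dist P d \<le> edist d x y"
  unfolding min_dist_def using finite_edist_image[of P d "\<lambda>x y. x \<noteq> y"] by (intro Min_le) auto

lemma obtain_two_points:
  assumes "finite P" "card P \<ge> 2"
  obtains a b where "a \<in> P" "b \<in> P" "a \<noteq> b"
  using assms card_le_Suc0_iff_eq[OF assms(1)] by (metis not_less_eq_eq numeral_2_eq_2)

lemma min_dist_pos: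
  assumes "finite P" "card P \<ge> 2" "\<forall>x\<in>P. \<forall>j\<ge>d. x j = 0"
  shows "0 < min_dist P d"
proof -
  obtain a b where ab: "a \<in> P" "b \<in> P" "a \<noteq> b" using obtain_two_points[OF assms(1,2)] .
  have "min_dist P d \<in> {edist d x y | x y. x \<in> P \<and> y \<in> P \<and> x \<noteq> y}"
    unfolding min_dist_def using finite_edist_image[OF assms(1)] ab by (intro Min_in) auto
  then show ?thesis using assms(3) edist_pos by auto
qed

lemma min_dist_le_max_dist:
  assumes "finite P" "card P \<ge> 2"
  shows "min_dist P d \<le> max_dist P d"
proof -
  obtain a b where ab: "a \<in> P" "b \<in> P" "a \<noteq> b" using obtain_two_points[OF assms] .
  show ?thesis
    using min_dist_le_edist[OF assms(1) ab, where d=d]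
      edist_le_max_dist[OF assms(1) ab(1,2), where d=d]
    by simp
qed

lemma one_le_aspect_ratio:
  assumes "finite P" "card P \<ge> 2" "\<forall>x\<in>P. \<forall>j\<ge>d. x j = 0"
  shows "1 \<le> aspect_ratio P d"
  using min_dist_pos[OF assms] min_dist_le_max_dist[OF assms(1,2)] by (simp add: aspect_ratio_def)

lemma one_le_dim_times_aspect_ratio:
  assumes "d \<ge> 1" "finite P" "card P \<ge> 2" "\<forall>x\<in>P. \<forall>j\<ge>d. x j = 0"
  shows "1 \<le> real d * aspect_ratio P d"
  using assms(1) one_le_aspect_ratio[OF assms(2-4)] mult_mono[of 1 "real d" 1 "aspect_ratio P d"]
  by simp

text \<open>At this height the cubes have side at most min_dist / d, which separates all points.\<close>
lemma separating_height_log_aspect_ratio: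
  assumes "d \<ge> 1" "finite P" "card P \<ge> 2" "\<forall>x\<in>P. \<forall>j\<ge>d. x j = 0"
    and "max_dist P d \<le> MD" "MD \<le> 2 * max_dist P d"
  shows "separating_height P d p0 MD s (nat \<lceil>log 2 (real d * aspect_ratio P d)\<rceil> + 2)"
  unfolding separating_height_def
proof (intro ballI impI)
  fix x y assume xy: "x \<in> P" "y \<in> P" "x \<noteq> y"
  define i where "i = nat \<lceil>log 2 (real d * aspect_ratio P d)\<rceil> + 2"
  have md: "0 < min_dist P d" using min_dist_pos[OF assms(2-4)] .
  have M: "0 < max_dist P d" using md min_dist_le_max_dist[OF assms(2,3), where d=d] by linarith
  have MD: "0 < MD" using M assms(5) by linarith
  have "0 < real d * aspect_ratio P d"
    using one_le_dim_times_aspect_ratio[OF assms(1-4)] by simp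
  then have "4 * (real d * aspect_ratio P d) \<le> 2 ^ i"
    using le_two_power_nat_ceiling_log by (simp add: i_def power_add)
  then have "real d * (2 * MD / 2 ^ i)
      \<le> real d * (4 * max_dist P d / (4 * (real d * aspect_ratio P d)))"
    using assms(1,6) MD \<open>0 < real d * aspect_ratio P d\<close>
    by (intro mult_left_mono frac_le) auto
  also have "\<dots> = min_dist P d"
    using assms(1) md M by (simp add: aspect_ratio_def field_simps)
  also have "\<dots> \<le> edist d x y" using min_dist_le_edist[OF assms(2) xy] .
  finally show "cell d p0 MD s i x \<noteq> cell d p0 MD s i y"
    by (rule cell_neq_if_side_small[OF assms(1) MD, rotated]) (simp add: i_def)
qed

lemma theight_le_log_aspect_ratio:
  assumes "d \<ge> 1" "finite P" "card P \<ge> 2" "\<forall>x\<in>P. \<forall>j\<ge>d. x j = 0"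
    and "max_dist P d \<le> MD" "MD \<le> 2 * max_dist P d"
  shows "real (theight P d p0 MD s) \<le> log 2 (real d * aspect_ratio P d) + 3"
proof -
  have "0 \<le> log 2 (real d * aspect_ratio P d)"
    using one_le_dim_times_aspect_ratio[OF assms(1-4)] by simp
  moreover have "theight P d p0 MD s \<le> nat \<lceil>log 2 (real d * aspect_ratio P d)\<rceil> + 2"
    using theight_separating_le(2)[OF separating_height_log_aspect_ratio[OF assms]] .
  ultimately show ?thesis by linarith
qed

lemma sample_update_cost_le:
  assumes "1 \<le> n"
  shows "real (sample_update_cost n) \<le> log 2 (real n) + 2"
proof -
  have "0 \<le> log 2 (real n)" using assms by simp
  then show ?thesis unfolding sample_update_cost_def by linarith
qed

context
  fixes P :: "pt set" and d :: nat and p0 :: pt and MD :: real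
begin

definition tree_nodes :: "real \<Rightarrow> node set" where
  "tree_nodes s = (\<lambda>(i, y). tnode d p0 MD s i y) ` ({..theight P d p0 MD s} \<times> P)"

definition path_nodes :: "real \<Rightarrow> node set \<Rightarrow> pt \<Rightarrow> node set" where
  "path_nodes s mk x =
     (\<lambda>k. tnode d p0 MD s (theight P d p0 MD s - k) x) ` {..path_len P d p0 MD s mk x}"

definition potential :: "real \<Rightarrow> node set \<Rightarrow> nat" where
  "potential s mk =
     card mk + (1 + sample_update_cost (card P)) * (\<Sum>v\<in>mk. card (subtree_pts P d p0 MD s v))"

text \<open>\<open>Z\<close> is the set of points still to be opened.\<close>
definition admissible_marks :: "real \<Rightarrow> node set \<Rightarrow> pt set \<Rightarrow> bool" where
  "admissible_marks s mk Z \<longleftrightarrow>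
     mk \<subseteq> tree_nodes s \<and> (\<forall>z\<in>Z. tnode d p0 MD s (theight P d p0 MD s) z \<notin> mk)"

lemma path_len_le_theight: "path_len P d p0 MD s mk x \<le> theight P d p0 MD s"
  unfolding path_len_def Let_def by (rule Least_le) simp

lemma card_path_nodes: "card (path_nodes s mk x) = path_len P d p0 MD s mk x + 1"
proof -
  have "inj_on (\<lambda>k. tnode d p0 MD s (theight P d p0 MD s - k) x) {..path_len P d p0 MD s mk x}"
    using path_len_le_theight[of s mk x] by (auto simp: inj_on_def tnode_def)
  then show ?thesis by (simp add: path_nodes_def card_image)
qed

lemma path_nodes_subset_tree_nodes: "x \<in> P \<Longrightarrow> path_nodes s mk x \<subseteq> tree_nodes s"
  by (fastforce simp: path_nodes_def tree_nodes_def image_iff)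

text \<open>The path stops below the first marked ancestor, so only its leaf could be marked.\<close>
lemma path_nodes_unmarked:
  assumes "tnode d p0 MD s (theight P d p0 MD s) x \<notin> mk"
  shows "path_nodes s mk x \<inter> mk = {}"
proof -
  have "tnode d p0 MD s (theight P d p0 MD s - k) x \<notin> mk"
    if "k \<le> path_len P d p0 MD s mk x" for k
  proof (cases k)
    case 0
    with assms show ?thesis by simp
  next
    case (Suc k')
    with that have "k' < path_len P d p0 MD s mk x" by simp
    then have "\<not> (k' = theight P d p0 MD s \<or> tnode d p0 MD s (theight P d p0 MD s - Suc k') x \<in> mk)"
      unfolding path_len_def Let_def by (rule not_less_Least)
    with Suc show ?thesis by simp
  qed
  then show ?thesis by (auto simp: path_nodes_def)
qed

lemma open_tree_marks:
  "open_tree P d p0 MD s w mk x = (w', mk', c) \<Longrightarrow> mk' = mk \<union> path_nodes s mk x"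
  by (auto simp: open_tree_def Let_def path_nodes_def)

lemma open_tree_cost_le:
  assumes "open_tree P d p0 MD s w mk x = (w', mk', c)"
  shows "c \<le> card (path_nodes s mk x)
    + (1 + sample_update_cost (card P)) * (\<Sum>v\<in>path_nodes s mk x. card (subtree_pts P d p0 MD s v))"
proof -
  let ?slen = "sample_update_cost (card P)"
  define Q where "Q = subtree_pts P d p0 MD s
    (tnode d p0 MD s (theight P d p0 MD s - path_len P d p0 MD s mk x) x)"
  define upd where "upd y \<longleftrightarrow> (tree_dist P d p0 MD s y x)^2 < w y" for y
  have c: "c = card (path_nodes s mk x) + (\<Sum>y\<in>Q. 1 + (if upd y then ?slen else 0))"
    using assms by (simp add: open_tree_def Let_def Q_def upd_def card_path_nodes)
  have "(\<Sum>y\<in>Q. 1 + (if upd y then ?slen else 0)) \<le> card Q * (1 + ?slen)"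
    using sum_bounded_above[of Q "\<lambda>y. 1 + (if upd y then ?slen else 0)" "1 + ?slen"] by simp
  also have "\<dots> \<le> (\<Sum>v\<in>path_nodes s mk x. card (subtree_pts P d p0 MD s v)) * (1 + ?slen)"
    unfolding Q_def by (intro mult_right_mono member_le_sum) (auto simp: path_nodes_def)
  finally show ?thesis using c by (simp add: mult.commute)
qed

lemma open_tree_potential_increase:
  assumes "finite mk" "tnode d p0 MD s (theight P d p0 MD s) x \<notin> mk"
    and "open_tree P d p0 MD s w mk x = (w', mk', c)"
  shows "c + potential s mk \<le> potential s mk'"
proof -
  have "finite (path_nodes s mk x)" by (simp add: path_nodes_def)
  then have "potential s mk' = potential s mk + card (path_nodes s mk x)
      + (1 + sample_update_cost (card P))
        * (\<Sum>v\<in>path_nodes s mk x. card (subtree_pts P d p0 MD s v))"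
    using assms path_nodes_unmarked[OF assms(2)]
    by (simp add: open_tree_marks[OF assms(3)] potential_def card_Un_disjoint sum.union_disjoint
        Int_commute distrib_left)
  then show ?thesis using open_tree_cost_le[OF assms(3)] by linarith
qed

lemma open_tree_admissible:
  assumes sep: "separating_height P d p0 MD s (theight P d p0 MD s)"
    and "x \<in> P" "Z \<subseteq> P" "x \<notin> Z" "admissible_marks s mk (insert x Z)"
    and "open_tree P d p0 MD s w mk x = (w', mk', c)"
  shows "admissible_marks s mk' Z"
proof -
  have "tnode d p0 MD s (theight P d p0 MD s) z \<notin> path_nodes s mk x" if "z \<in> Z" for z
  proof
    assume "tnode d p0 MD s (theight P d p0 MD s) z \<in> path_nodes s mk x"
    then have "cell d p0 MD s (theight P d p0 MD s) z = cell d p0 MD s (theight P d p0 MD s) x"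
      by (auto simp: path_nodes_def tnode_def)
    moreover have "z \<in> P" "z \<noteq> x" using that assms(3,4) by auto
    ultimately show False using sep \<open>x \<in> P\<close> by (auto simp: separating_height_def)
  qed
  then show ?thesis
    using assms(5) path_nodes_subset_tree_nodes[OF assms(2)]
    by (auto simp: admissible_marks_def open_tree_marks[OF assms(6)])
qed

lemma potential_mono: "mk \<subseteq> mk' \<Longrightarrow> finite mk' \<Longrightarrow> potential s mk \<le> potential s mk'"
  by (auto simp: potential_def intro!: add_mono card_mono mult_le_mono2 sum_mono2)

context
  assumes finite_P: "finite P"
begin

lemma finite_tree_nodes: "finite (tree_nodes s)"
  using finite_P by (simp add: tree_nodes_def)

lemma multi_open_potential:
  assumes sep: "\<forall>t<3. separating_height P d p0 MD (sh t) (theight P d p0 MD (sh t))"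
    and "x \<in> P" "Z \<subseteq> P" "x \<notin> Z"
    and adm: "\<forall>t<3. admissible_marks (sh t) (snd st t) (insert x Z)"
    and mo: "multi_open P d p0 MD sh st x = (st', c)"
  shows "c + (\<Sum>t<3. potential (sh t) (snd st t)) \<le> (\<Sum>t<3. potential (sh t) (snd st' t))"
    and "\<forall>t<3. admissible_marks (sh t) (snd st' t) Z"
proof -
  obtain w mk where st: "st = (w, mk)" by fastforce
  have step: "c' + potential (sh t) (mk t) \<le> potential (sh t) m' \<and> admissible_marks (sh t) m' Z"
    if "t < 3" "open_tree P d p0 MD (sh t) w' (mk t) x = (w'', m', c')" for t w' w'' m' c'
  proof
    have adm_t: "admissible_marks (sh t) (mk t) (insert x Z)" using adm that(1) st by simp
    then have "finite (mk t)"
      using finite_tree_nodes by (auto simp: admissible_marks_def intro: finite_subset)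
    with adm_t show "c' + potential (sh t) (mk t) \<le> potential (sh t) m'"
      using open_tree_potential_increase[OF _ _ that(2)] by (simp add: admissible_marks_def)
    show "admissible_marks (sh t) m' Z"
      using open_tree_admissible[OF _ assms(2-4) adm_t that(2)] sep that(1) by blast
  qed
  obtain w1 m1 c1 where o1: "open_tree P d p0 MD (sh 0) w (mk 0) x = (w1, m1, c1)"
    by (metis prod_cases3)
  obtain w2 m2 c2 where o2: "open_tree P d p0 MD (sh 1) w1 (mk 1) x = (w2, m2, c2)"
    by (metis prod_cases3)
  obtain w3 m3 c3 where o3: "open_tree P d p0 MD (sh 2) w2 (mk 2) x = (w3, m3, c3)"
    by (metis prod_cases3)
  have st': "snd st' = mk(0 := m1, 1 := m2, 2 := m3)" and c: "c = c1 + c2 + c3"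
    using mo o1 o2 o3 by (auto simp: multi_open_def st)
  have three: "(\<Sum>t<3. f t) = f 0 + f 1 + f (2::nat)" for f :: "nat \<Rightarrow> nat"
    by (simp add: numeral_3_eq_3 numeral_2_eq_2)
  have "t < 3 \<longleftrightarrow> t = 0 \<or> t = 1 \<or> t = 2" for t :: nat by auto
  with step[OF _ o1] step[OF _ o2] step[OF _ o3]
  show "c + (\<Sum>t<3. potential (sh t) (snd st t)) \<le> (\<Sum>t<3. potential (sh t) (snd st' t))"
    and "\<forall>t<3. admissible_marks (sh t) (snd st' t) Z"
    by (simp_all add: three st st' c)
qed

lemma open_seq_potential:
  assumes sep: "\<forall>t<3. separating_height P d p0 MD (sh t) (theight P d p0 MD (sh t))"
  shows "set xs \<subseteq> P \<Longrightarrow> distinct xs \<Longrightarrow> \<forall>t<3. admissible_marks (sh t) (snd st t) (set xs) \<Longrightarrow>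
    open_seq P d p0 MD sh st xs + (\<Sum>t<3. potential (sh t) (snd st t))
      \<le> (\<Sum>t<3. potential (sh t) (tree_nodes (sh t)))"
proof (induction xs arbitrary: st)
  case Nil
  then show ?case
    using finite_tree_nodes by (auto simp: admissible_marks_def intro!: sum_mono potential_mono)
next
  case (Cons x xs)
  obtain st' c where mo: "multi_open P d p0 MD sh st x = (st', c)" by fastforce
  have x: "x \<in> P" "set xs \<subseteq> P" "x \<notin> set xs" and "distinct xs"
    using Cons.prems(1,2) by auto
  have "\<forall>t<3. admissible_marks (sh t) (snd st t) (insert x (set xs))"
    using Cons.prems(3) by simp
  note step = multi_open_potential[OF sep x this mo]
  have "open_seq P d p0 MD sh st' xs + (\<Sum>t<3. potential (sh t) (snd st' t))
      \<le> (\<Sum>t<3. potential (sh t) (tree_nodes (sh t)))"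
    using Cons.IH[OF x(2) \<open>distinct xs\<close> step(2)] .
  moreover have "open_seq P d p0 MD sh st (x # xs) = c + open_seq P d p0 MD sh st' xs"
    using mo by simp
  ultimately show ?case using step(1) by linarith
qed

lemma open_seq_init_state_le:
  assumes "\<forall>t<3. separating_height P d p0 MD (sh t) (theight P d p0 MD (sh t))"
    and "set xs \<subseteq> P" "distinct xs"
  shows "open_seq P d p0 MD sh (init_state d MD) xs \<le> (\<Sum>t<3. potential (sh t) (tree_nodes (sh t)))"
proof -
  have "open_seq P d p0 MD sh (init_state d MD) xs
      + (\<Sum>t<3. potential (sh t) (snd (init_state d MD) t))
      \<le> (\<Sum>t<3. potential (sh t) (tree_nodes (sh t)))"
    by (rule open_seq_potential[OF assms]) (simp add: init_state_def admissible_marks_def)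
  then show ?thesis by (simp add: init_state_def potential_def)
qed

text \<open>Double counting: each point lies in exactly one node per height.\<close>
lemma sum_card_subtree_pts_le:
  "(\<Sum>v\<in>tree_nodes s. card (subtree_pts P d p0 MD s v)) \<le> (theight P d p0 MD s + 1) * card P"
proof -
  have fin: "\<forall>v\<in>tree_nodes s. finite (subtree_pts P d p0 MD s v)"
    using finite_P by (simp add: subtree_pts_def)
  have "Sigma (tree_nodes s) (subtree_pts P d p0 MD s)
      \<subseteq> (\<lambda>(i, y). (tnode d p0 MD s i y, y)) ` ({..theight P d p0 MD s} \<times> P)"
    by (force simp: tree_nodes_def subtree_pts_def tnode_def image_iff)
  then have "card (Sigma (tree_nodes s) (subtree_pts P d p0 MD s))
      \<le> card ({..theight P d p0 MD s} \<times> P)"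
    using finite_P by (intro surj_card_le) auto
  then show ?thesis using finite_tree_nodes fin by (simp add: card_cartesian_product)
qed

lemma potential_tree_nodes_le:
  "potential s (tree_nodes s)
    \<le> (2 + sample_update_cost (card P)) * ((theight P d p0 MD s + 1) * card P)"
proof -
  have "card (tree_nodes s) \<le> card ({..theight P d p0 MD s} \<times> P)"
    unfolding tree_nodes_def using finite_P by (intro card_image_le) simp
  then have "card (tree_nodes s) \<le> (theight P d p0 MD s + 1) * card P"
    by (simp add: card_cartesian_product)
  then show ?thesis
    using sum_card_subtree_pts_le[of s] by (simp add: potential_def add_mono)
qed

lemma potential_tree_nodes_le_log:
  assumes "d \<ge> 1" "card P \<ge> 2" "\<forall>x\<in>P. \<forall>j\<ge>d. x j = 0"
    and "max_dist P d \<le> MD" "MD \<le> 2 * max_dist P d"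
  shows "real (potential s (tree_nodes s))
    \<le> 20 * real (card P) * (1 + log 2 (real d * aspect_ratio P d)) * log 2 (real (card P))"
proof -
  define L where "L = log 2 (real d * aspect_ratio P d)"
  define n where "n = card P"
  have L: "0 \<le> L"
    using one_le_dim_times_aspect_ratio[OF assms(1) finite_P assms(2,3)] by (simp add: L_def)
  have "real (theight P d p0 MD s) \<le> L + 3"
    using theight_le_log_aspect_ratio[OF assms(1) finite_P assms(2-5)] by (simp add: L_def)
  with L have height: "real (theight P d p0 MD s) + 1 \<le> 4 * (1 + L)" by (simp add: algebra_simps)
  have logn: "1 \<le> log 2 (real n)" using assms(2) by (simp add: n_def)
  have "real (sample_update_cost n) \<le> log 2 (real n) + 2"
    using assms(2) by (intro sample_update_cost_le) (simp add: n_def)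
  with logn have cost: "2 + real (sample_update_cost n) \<le> 5 * log 2 (real n)" by linarith
  have "real (potential s (tree_nodes s))
      \<le> (2 + real (sample_update_cost n)) * ((real (theight P d p0 MD s) + 1) * real n)"
  proof -
    have "real (potential s (tree_nodes s))
        \<le> real ((2 + sample_update_cost n) * ((theight P d p0 MD s + 1) * n))"
      using potential_tree_nodes_le[of s] unfolding n_def by (simp only: of_nat_le_iff)
    then show ?thesis by (simp add: algebra_simps)
  qed
  also have "\<dots> \<le> (5 * log 2 (real n)) * (4 * (1 + L) * real n)"
    using cost height L by (intro mult_mono) auto
  also have "\<dots> = 20 * real n * (1 + L) * log 2 (real n)" by (simp add: algebra_simps)
  finally show ?thesis by (simp add: L_def n_def)
qed

end

end

theorem mainTheorem4:
  "\<exists>C>0. \<forall>(d::nat) (P::pt set) (p0::pt) (MD::real) (sh::nat \<Rightarrow> real) (xs::pt list).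
     d \<ge> 1 \<longrightarrow> finite P \<longrightarrow> card P \<ge> 2 \<longrightarrow>
     (\<forall>x\<in>P. \<forall>j\<ge>d. x j = 0) \<longrightarrow>
     p0 \<in> P \<longrightarrow>
     max_dist P d \<le> MD \<longrightarrow> MD \<le> 2 * max_dist P d \<longrightarrow>
     (\<forall>t<3. 0 \<le> sh t \<and> sh t \<le> MD) \<longrightarrow>
     set xs \<subseteq> P \<longrightarrow> distinct xs \<longrightarrow>
     real (open_seq P d p0 MD sh (init_state d MD) xs)
       \<le> C * real (card P) * (1 + log 2 (real d * aspect_ratio P d)) * log 2 (real (card P))"
proof (intro exI[of _ 60] conjI allI impI)
  fix d :: nat and P :: "pt set" and p0 :: pt and MD :: real
    and sh :: "nat \<Rightarrow> real" and xs :: "pt list"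
  \<comment> \<open>The bound holds for every anchor and shift: \<open>p0 \<in> P\<close> and the range of the shifts are unused.\<close>
  assume d: "d \<ge> 1" and fin: "finite P" and card: "card P \<ge> 2" and dim: "\<forall>x\<in>P. \<forall>j\<ge>d. x j = 0"
    and "p0 \<in> P" and MD: "max_dist P d \<le> MD" "MD \<le> 2 * max_dist P d"
    and "\<forall>t<3. 0 \<le> sh t \<and> sh t \<le> MD" and xs: "set xs \<subseteq> P" "distinct xs"
  define B where
    "B = 20 * real (card P) * (1 + log 2 (real d * aspect_ratio P d)) * log 2 (real (card P))"
  have "\<forall>t<3. separating_height P d p0 MD (sh t) (theight P d p0 MD (sh t))"
    using theight_separating_le(1)[OF separating_height_log_aspect_ratio[OF d fin card dim MD]]
    by blast
  from open_seq_init_state_le[OF fin this xs]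
  have "real (open_seq P d p0 MD sh (init_state d MD) xs)
      \<le> (\<Sum>t<3. real (potential P d p0 MD (sh t) (tree_nodes P d p0 MD (sh t))))"
    by (metis of_nat_le_iff of_nat_sum)
  also have "\<dots> \<le> (\<Sum>t<(3::nat). B)"
    using potential_tree_nodes_le_log[OF fin d card dim MD] by (intro sum_mono) (simp add: B_def)
  finally show "real (open_seq P d p0 MD sh (init_state d MD) xs)
      \<le> 60 * real (card P) * (1 + log 2 (real d * aspect_ratio P d)) * log 2 (real (card P))"
    by (simp add: B_def)
qed simp

end
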